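(* Suppose $S(Y)$ is such that for every $z\in S(Y)$ there exists a strict ordering $P$ of $Y$ with $z_j\in\overline{W}(Y,P)$ for all $j\in\{1,\dots,m\}$, where $z_j=(z_{j,d(y)})_{y\in Y}$. If an ensemble choice aggregator $C$ satisfies ensemble unanimity, then $C$ respects model choice reversal.
   Context: Let $Y$ be a nonempty set of labels and $m\ge 2$ an integer (the number of models). For each $j\in\{1,\dots,m\}$ let $S_j(Y)\subseteq\mathbb{R}^{|Y|}$ be a set of score vectors whose coordinates are indexed by labels (write $w_{d(y)}$ for the coordinate of $w$ corresponding to label $y$), and let $S(Y)=\prod_{j=1}^m S_j(Y)$. An element $z\in S(Y)$ is written $z=(z_{j,d(y)})_{j,y}$, where $z_{j,d(y)}$ denotes model $j$'s score for label $y$. For a strict (total) ordering $P$ of $Y$, $\overline{W}(Y,P)=\{w\in\mathbb{R}^{|Y|}: \text{for all } y,y'\in Y,\ y\,P\,y' \iff w_{d(y)}>w_{d(y')}\}$. An ensemble choice aggregator is a set-valued function $C:(2^Y\setminus\{\emptyset\})\times S(Y)\to 2^Y\setminus\{\emptyset\}$ such that for every nonempty $Y^*\subseteq Y$ and every $z\in S(Y)$: (i) $C(Y^*,z)\subseteq Y^*$; and (ii) for every $y\in Y^*$, if there does not exist $y'\in Y^*$ with $\{y'\}=C(\{y,y'\},z)$, then $y\in C(Y^*,z)$. Ensemble unanimity: for all $y,y'\in Y$ and all $z\in S(Y)$, if $z_{j,d(y)}>z_{j,d(y')}$ for all $j$ then $\{y\}=C(\{y,y'\},z)$. Model choice reversal: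 for all $y,y'\in Y$ and all $z,z'\in S(Y)$, whenever $y\in C(\{y,y'\},z)$, $y'\notin C(\{y,y'\},z)$ and $y'\in C(\{y,y'\},z')$, there exists $j$ with $z_{j,d(y)}>z_{j,d(y')}$ and $z'_{j,d(y)}<z'_{j,d(y')}$. *)

theory Defs
  imports Complex_Main "HOL-Library.FuncSet"
begin

text \<open>A score vector in R^|Y| indexed by
labels is an extensional function w in Y ->E UNIV, with w y the coordinate d(y).
A profile z assigns to each model j in {1..m} a score vector z j; the profile
space S(Y) = prod_j S_j(Y) is PiE {1..m} Sj.\<close>

definition profile_space :: "nat \<Rightarrow> (nat \<Rightarrow> ('y \<Rightarrow> real) set) \<Rightarrow> (nat \<Rightarrow> 'y \<Rightarrow> real) set" where
  "profile_space m Sj = PiE {1..m} Sj"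

definition Wbar :: "'y set \<Rightarrow> 'y rel \<Rightarrow> ('y \<Rightarrow> real) set" where
  "Wbar Y P = {w \<in> Y \<rightarrow>\<^sub>E (UNIV :: real set).
      \<forall>y\<in>Y. \<forall>y'\<in>Y. ((y, y') \<in> P \<longleftrightarrow> w y > w y')}"

definition ensemble_choice_aggregator ::
  "'y set \<Rightarrow> (nat \<Rightarrow> 'y \<Rightarrow> real) set \<Rightarrow> ('y set \<Rightarrow> (nat \<Rightarrow> 'y \<Rightarrow> real) \<Rightarrow> 'y set) \<Rightarrow> bool" where
  "ensemble_choice_aggregator Y S C \<longleftrightarrow>
     (\<forall>Ys z. Ys \<subseteq> Y \<and> Ys \<noteq> {} \<and> z \<in> S \<longrightarrow>
        C Ys z \<subseteq> Ys \<and> C Ys z \<noteq> {} \<and>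
        (\<forall>y\<in>Ys. \<not> (\<exists>y'\<in>Ys. {y'} = C {y, y'} z) \<longrightarrow> y \<in> C Ys z))"

definition ensemble_unanimity ::
  "'y set \<Rightarrow> nat \<Rightarrow> (nat \<Rightarrow> 'y \<Rightarrow> real) set \<Rightarrow> ('y set \<Rightarrow> (nat \<Rightarrow> 'y \<Rightarrow> real) \<Rightarrow> 'y set) \<Rightarrow> bool" where
  "ensemble_unanimity Y m S C \<longleftrightarrow>
     (\<forall>y\<in>Y. \<forall>y'\<in>Y. \<forall>z\<in>S.
        (\<forall>j\<in>{1..m}. z j y > z j y') \<longrightarrow> {y} = C {y, y'} z)"

definition model_choice_reversal ::
  "'y set \<Rightarrow> nat \<Rightarrow> (nat \<Rightarrow> 'y \<Rightarrow> real) set \<Rightarrow> ('y set \<Rightarrow> (nat \<Rightarrow> 'y \<Rightarrow> real) \<Rightarrow> 'y set) \<Rightarrow> bool" where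
  "model_choice_reversal Y m S C \<longleftrightarrow>
     (\<forall>y\<in>Y. \<forall>y'\<in>Y. \<forall>z\<in>S. \<forall>z'\<in>S.
        y \<in> C {y, y'} z \<and> y' \<notin> C {y, y'} z \<and> y' \<in> C {y, y'} z' \<longrightarrow>
        (\<exists>j\<in>{1..m}. z j y > z j y' \<and> z' j y < z' j y'))"

end

theory Submission
  imports Defs
begin

text \<open>If every profile is ordinally aligned (all models rank the labels by one common strict
order), then on any pair of labels the models are either unanimous for one label or unanimous
for the other. Unanimity therefore forces the aggregator to pick the unanimously preferred
label, so a label is chosen from a pair only if every model ranks it first; a reversal of the
choice between two profiles is then a reversal in every model, in particular in model 1.\<close>

definition unanimously_prefers ::
  "nat set \<Rightarrow> (nat \<Rightarrow> 'y \<Rightarrow> real) \<Rightarrow> 'y \<Rightarrow> 'y \<Rightarrow> bool" where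
  "unanimously_prefers J z y y' \<longleftrightarrow> (\<forall>j\<in>J. z j y' < z j y)"

lemma Wbar_less_iff:
  assumes "w \<in> Wbar Y P" and "y \<in> Y" and "y' \<in> Y"
  shows "w y' < w y \<longleftrightarrow> (y, y') \<in> P"
  using assms unfolding Wbar_def by blast

lemma aligned_profile_unanimous_on_pair:
  assumes "strict_linear_order_on Y P" and "\<forall>j\<in>J. z j \<in> Wbar Y P"
    and "y \<in> Y" and "y' \<in> Y" and "y \<noteq> y'"
  shows "unanimously_prefers J z y y' \<or> unanimously_prefers J z y' y"
proof -
  have "(y, y') \<in> P \<or> (y', y) \<in> P"
    using assms(1,3-5) unfolding strict_linear_order_on_def total_on_def by blast
  then show ?thesis
    using assms(2-4) Wbar_less_iff unfolding unanimously_prefers_def by metis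
qed

lemma ensemble_unanimity_pair_choice:
  assumes "ensemble_unanimity Y m S C" and "z \<in> S" and "y \<in> Y" and "y' \<in> Y"
    and "unanimously_prefers {1..m} z y y'"
  shows "C {y, y'} z = {y}"
  using assms unfolding ensemble_unanimity_def unanimously_prefers_def by (metis atLeastAtMost_iff)

lemma chosen_not_unanimously_rejected:
  assumes "ensemble_unanimity Y m S C" and "z \<in> S" and "y \<in> Y" and "y' \<in> Y"
    and "y \<noteq> y'" and "y' \<in> C {y, y'} z"
  shows "\<not> unanimously_prefers {1..m} z y y'"
  using ensemble_unanimity_pair_choice[OF assms(1-4)] assms(5,6) by auto

theorem lemma4:
  fixes Y :: "'y set" and m :: nat
    and Sj :: "nat \<Rightarrow> ('y \<Rightarrow> real) set"
    and C :: "'y set \<Rightarrow> (nat \<Rightarrow> 'y \<Rightarrow> real) \<Rightarrow> 'y set"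
  assumes "finite Y" and "Y \<noteq> {}" and "m \<ge> 2"
    and "\<forall>j\<in>{1..m}. Sj j \<subseteq> Y \<rightarrow>\<^sub>E (UNIV :: real set)"
    and "\<forall>z\<in>profile_space m Sj. \<exists>P. strict_linear_order_on Y P \<and>
           (\<forall>j\<in>{1..m}. z j \<in> Wbar Y P)"
    and "ensemble_choice_aggregator Y (profile_space m Sj) C"
    and "ensemble_unanimity Y m (profile_space m Sj) C"
  shows "model_choice_reversal Y m (profile_space m Sj) C"
  unfolding model_choice_reversal_def
proof (intro ballI impI)
  fix y y' z z'
  assume "y \<in> Y" "y' \<in> Y" and z: "z \<in> profile_space m Sj" and z': "z' \<in> profile_space m Sj"
    and choices: "y \<in> C {y, y'} z \<and> y' \<notin> C {y, y'} z \<and> y' \<in> C {y, y'} z'"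
  have "y \<noteq> y'" using choices by blast
  have dichotomy: "unanimously_prefers {1..m} x y y' \<or> unanimously_prefers {1..m} x y' y"
    if "x \<in> profile_space m Sj" for x
    using assms(5) that aligned_profile_unanimous_on_pair \<open>y \<in> Y\<close> \<open>y' \<in> Y\<close> \<open>y \<noteq> y'\<close> by metis
  have "\<not> unanimously_prefers {1..m} z y' y"
    using chosen_not_unanimously_rejected[OF assms(7) z \<open>y' \<in> Y\<close> \<open>y \<in> Y\<close>] choices
      \<open>y \<noteq> y'\<close> by (simp add: insert_commute)
  then have "unanimously_prefers {1..m} z y y'" using dichotomy[OF z] by blast
  moreover have "\<not> unanimously_prefers {1..m} z' y y'"
    using chosen_not_unanimously_rejected[OF assms(7) z' \<open>y \<in> Y\<close> \<open>y' \<in> Y\<close> \<open>y \<noteq> y'\<close>] choices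
    by blast
  then have "unanimously_prefers {1..m} z' y' y" using dichotomy[OF z'] by blast
  moreover have "1 \<in> {1..m}" using assms(3) by simp
  ultimately show "\<exists>j\<in>{1..m}. z j y' < z j y \<and> z' j y < z' j y'"
    unfolding unanimously_prefers_def by blast
qed

end
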